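(* Let $(J,\mathcal F)$ and $w^S_j>0$ be as in the context, and assume $w^S_j\le w^T_j$ whenever $j\in S\subset T$ with $S,T\in\mathcal F$. Let $\mathbf c$ be $\mathcal F$-admissible and let $\mathrm{AG}_2$ on input $\mathbf c$ produce $\boldsymbol\pi$, $\boldsymbol\nu$, $S_k$, $\nu^{S_k}_j$. Then (a) for $1\le k\le n-1$, $\nu^{S_k}_j\le\nu^{S_{k+1}}_j$ for all $j\in S_{k+1}$; (b) for $1\le k<l\le n$, $$\nu_{\pi_k}=\nu^{S_k}_{\pi_k}\le\nu^{S_k}_{\pi_l}\le\nu^{S_{k+1}}_{\pi_l}\le\cdots\le\nu^{S_{l-1}}_{\pi_l}\le\nu^{S_l}_{\pi_l}=\nu_{\pi_l}.$$
   Context: $J$ finite, $|J|=n$; $\mathcal F\subseteq2^J$ with $\emptyset\in\mathcal F$, each nonempty $S\in\mathcal F$ having nonempty $\partial^-S=\{j\in S:S\setminus\{j\}\in\mathcal F\}$, each $S\in\mathcal F\ne J$ having $j\notin S$ with $S\cup\{j\}\in\mathcal F$. Coefficients $w^S_j>0$ for $j\in S\in\mathcal F$. $\mathrm{AG}_2$ on input $\mathbf c$: $S_1=J$, $\nu^{S_1}_j=c_j/w^{S_1}_j$, $\pi_1\in\arg\min\{\nu^{S_1}_j:j\in\partial^-S_1\}$, $\nu_{\pi_1}=\nu^{S_1}_{\pi_1}$; for $k=2..n$: $S_k=S_{k-1}\setminus\{\pi_{k-1}\}$, $\nu^{S_k}_j=\nu^{S_{k-1}}_j+(w^{S_{k-1}}_j/w^{S_k}_j-1)[\nu^{S_{k-1}}_j-\nu^{S_{k-1}}_{\pi_{k-1}}]$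 ($j\in S_k$), $\pi_k\in\arg\min\{\nu^{S_k}_j:j\in\partial^-S_k\}$, $\nu_{\pi_k}=\nu^{S_k}_{\pi_k}$. $\mathbf c$ is $\mathcal F$-admissible if $\nu_{\pi_1}\le\cdots\le\nu_{\pi_n}$. *)

theory Defs
  imports Complex_Main
begin

definition lower_boundary :: "'a set set \<Rightarrow> 'a set \<Rightarrow> 'a set" where
  "lower_boundary F S = {j \<in> S. S - {j} \<in> F}"

definition set_system :: "'a set \<Rightarrow> 'a set set \<Rightarrow> bool" where
  "set_system J F \<longleftrightarrow> finite J \<and> F \<subseteq> Pow J \<and> {} \<in> F \<and>
     (\<forall>S\<in>F. S \<noteq> {} \<longrightarrow> lower_boundary F S \<noteq> {}) \<and>
     (\<forall>S\<in>F. S \<noteq> J \<longrightarrow> (\<exists>j\<in>J - S. insert j S \<in> F))"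

text \<open>A run of algorithm AG2 on input c with coefficients w.
  Steps are indexed 1..n with n = card J; S k is S_k, nu k j is nu^{S_k}_j,
  p k is p k = pi_k (any tie-breaking in the argmin is allowed).\<close>
definition AG2_run ::
  "'a set \<Rightarrow> 'a set set \<Rightarrow> ('a set \<Rightarrow> 'a \<Rightarrow> real) \<Rightarrow> ('a \<Rightarrow> real)
    \<Rightarrow> (nat \<Rightarrow> 'a set) \<Rightarrow> (nat \<Rightarrow> 'a \<Rightarrow> real) \<Rightarrow> (nat \<Rightarrow> 'a) \<Rightarrow> bool" where
  "AG2_run J F w c S nu p \<longleftrightarrow>
     S 1 = J \<and>
     (\<forall>j\<in>J. nu 1 j = c j / w J j) \<and>
     (\<forall>k\<in>{2..card J}. S k = S (k - 1) - {p (k - 1)} \<and>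
        (\<forall>j\<in>S k. nu k j = nu (k - 1) j
            + (w (S (k - 1)) j / w (S k) j - 1) * (nu (k - 1) j - nu (k - 1) (p (k - 1))))) \<and>
     (\<forall>k\<in>{1..card J}. p k \<in> lower_boundary F (S k) \<and>
        (\<forall>j\<in>lower_boundary F (S k). nu k (p k) \<le> nu k j))"

definition AG2_admissible_run :: "nat \<Rightarrow> (nat \<Rightarrow> 'a \<Rightarrow> real) \<Rightarrow> (nat \<Rightarrow> 'a) \<Rightarrow> bool" where
  "AG2_admissible_run n nu p \<longleftrightarrow>
     (\<forall>k l. 1 \<le> k \<longrightarrow> k \<le> l \<longrightarrow> l \<le> n \<longrightarrow> nu k (p k) \<le> nu l (p l))"

end

theory Submission
  imports Defs
begin

text \<open>Since \<open>w T j \<le> w S j\<close> whenever \<open>T \<subset> S\<close>, the update at step \<open>k\<close> moves \<open>nu k j\<close>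
  away from the pivot value \<open>nu k (p k)\<close>: upwards if \<open>nu k j\<close> lies above it, downwards
  otherwise. Fix \<open>l\<close> and go backwards from \<open>k = l\<close>: if \<open>nu k (p l) < nu k (p k)\<close>, then
  \<open>nu (k+1) (p l) \<le> nu k (p l) < nu k (p k) \<le> nu (k+1) (p (k+1))\<close> by admissibility, so a
  failure at \<open>k\<close> forces one at \<open>k+1\<close>; hence \<open>nu k (p k) \<le> nu k (p l)\<close> for every \<open>k \<le> l\<close>.\<close>

lemma set_system_ground_set_in:
  assumes sys: "set_system J F" and "S \<in> F"
  shows "J \<in> F"
  using \<open>S \<in> F\<close>
proof (induction "card (J - S)" arbitrary: S rule: less_induct)
  case (less S)
  have fin: "finite J" and "S \<subseteq> J" using sys less.prems unfolding set_system_def by auto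
  show ?case
  proof (cases "S = J")
    case True
    with less.prems show ?thesis by simp
  next
    case False
    then obtain j where j: "j \<in> J - S" "insert j S \<in> F"
      using sys less.prems unfolding set_system_def by blast
    have "J - insert j S = (J - S) - {j}" by auto
    moreover have "card ((J - S) - {j}) < card (J - S)"
      using j(1) fin by (intro card_Diff1_less) auto
    ultimately have "card (J - insert j S) < card (J - S)" by simp
    with less.hyps j(2) show ?thesis by blast
  qed
qed

locale AG2_setting =
  fixes J :: "'a set" and F :: "'a set set" and w :: "'a set \<Rightarrow> 'a \<Rightarrow> real"
    and c :: "'a \<Rightarrow> real" and S :: "nat \<Rightarrow> 'a set" and nu :: "nat \<Rightarrow> 'a \<Rightarrow> real"
    and p :: "nat \<Rightarrow> 'a"
  assumes sys: "set_system J F"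
    and wpos: "\<forall>T\<in>F. \<forall>j\<in>T. w T j > 0"
    and wmono: "\<forall>A\<in>F. \<forall>B\<in>F. \<forall>j. j \<in> A \<longrightarrow> A \<subset> B \<longrightarrow> w A j \<le> w B j"
    and run: "AG2_run J F w c S nu p"
begin

lemma S_one: "S 1 = J"
  using run unfolding AG2_run_def by simp

lemma
  assumes "1 \<le> k" "k < card J"
  shows S_Suc: "S (Suc k) = S k - {p k}"
    and nu_Suc: "j \<in> S (Suc k) \<Longrightarrow>
      nu (Suc k) j = nu k j + (w (S k) j / w (S (Suc k)) j - 1) * (nu k j - nu k (p k))"
proof -
  have "Suc k \<in> {2..card J}" using assms by simp
  then show "S (Suc k) = S k - {p k}"
    and "j \<in> S (Suc k) \<Longrightarrow>
      nu (Suc k) j = nu k j + (w (S k) j / w (S (Suc k)) j - 1) * (nu k j - nu k (p k))"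
    using run unfolding AG2_run_def by auto
qed

lemma
  assumes "1 \<le> k" "k \<le> card J"
  shows p_in_S: "p k \<in> S k"
    and S_remove_p_in_F: "S k - {p k} \<in> F"
  using run assms unfolding AG2_run_def lower_boundary_def by auto

lemma S_in_F: "1 \<le> k \<Longrightarrow> k \<le> card J \<Longrightarrow> S k \<in> F"
proof (induction k)
  case (Suc k)
  show ?case
  proof (cases "k = 0")
    case True
    then show ?thesis using S_one set_system_ground_set_in[OF sys] sys
      unfolding set_system_def by auto
  next
    case False
    then show ?thesis using Suc S_Suc S_remove_p_in_F by simp
  qed
qed simp

lemma S_antimono:
  assumes "1 \<le> k" "k \<le> l" "l \<le> card J"
  shows "S l \<subseteq> S k"
  using assms(2,3)
proof (induction l rule: dec_induct)
  case (step l)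
  then show ?case using S_Suc[of l] assms(1) by auto
qed simp

lemma p_later_in_S: "1 \<le> k \<Longrightarrow> k \<le> l \<Longrightarrow> l \<le> card J \<Longrightarrow> p l \<in> S k"
  using S_antimono p_in_S by fastforce

lemma card_S:
  assumes "1 \<le> k" "k \<le> card J"
  shows "card (S k) = card J + 1 - k"
  using assms
proof (induction k rule: dec_induct)
  case base
  then show ?case using S_one by simp
next
  case (step k)
  have "finite (S k)"
    using S_antimono[of 1 k] S_one sys step unfolding set_system_def
    by (auto intro: finite_subset)
  then show ?case using step S_Suc p_in_S by simp
qed

lemma S_eq_image_p:
  assumes "1 \<le> k" "k \<le> card J"
  shows "S k = p ` {k..card J}"
  using assms(2,1)
proof (induction k rule: inc_induct)
  case base
  then have "card (S (card J)) = 1" using card_S by simp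
  moreover have "p (card J) \<in> S (card J)" using p_in_S base by simp
  ultimately show ?case by (auto simp: card_1_singleton_iff)
next
  case (step k)
  have "S k = insert (p k) (S (Suc k))" using S_Suc p_in_S step by auto
  moreover have "{k..card J} = insert k {Suc k..card J}" using step by auto
  ultimately show ?case using step by simp
qed

lemma nu_Suc_scaled_gap:
  assumes "1 \<le> k" "k < card J" "j \<in> S (Suc k)"
  obtains r where "r \<ge> 0" "nu (Suc k) j = nu k j + r * (nu k j - nu k (p k))"
proof -
  have F: "S (Suc k) \<in> F" "S k \<in> F" using S_in_F assms by auto
  have "S (Suc k) \<subset> S k" using S_Suc p_in_S assms by auto
  then have "w (S (Suc k)) j \<le> w (S k) j" using wmono F assms(3) by blast
  moreover have "w (S (Suc k)) j > 0" using wpos F assms(3) by blast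
  ultimately have "w (S k) j / w (S (Suc k)) j - 1 \<ge> 0" by simp
  then show thesis using that nu_Suc[OF assms] by blast
qed

lemma nu_Suc_ge:
  "1 \<le> k \<Longrightarrow> k < card J \<Longrightarrow> j \<in> S (Suc k) \<Longrightarrow> nu k (p k) \<le> nu k j \<Longrightarrow>
    nu k j \<le> nu (Suc k) j"
  by (elim nu_Suc_scaled_gap) auto

lemma nu_Suc_le:
  "1 \<le> k \<Longrightarrow> k < card J \<Longrightarrow> j \<in> S (Suc k) \<Longrightarrow> nu k j \<le> nu k (p k) \<Longrightarrow>
    nu (Suc k) j \<le> nu k j"
  by (elim nu_Suc_scaled_gap) (auto simp: mult_nonneg_nonpos)

end

locale AG2_admissible = AG2_setting +
  assumes adm: "AG2_admissible_run (card J) nu p"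
begin

lemma pivot_le_nu_p_later:
  assumes "1 \<le> k" "k \<le> l" "l \<le> card J"
  shows "nu k (p k) \<le> nu k (p l)"
  using assms(2,1)
proof (induction k rule: inc_induct)
  case (step k)
  have later: "p l \<in> S (Suc k)" using p_later_in_S step assms(3) by simp
  show ?case
  proof (rule ccontr)
    assume below: "\<not> nu k (p k) \<le> nu k (p l)"
    then have "nu (Suc k) (p l) \<le> nu k (p l)"
      using nu_Suc_le[OF step.prems _ later] step.hyps assms(3) by simp
    also have "\<dots> < nu k (p k)" using below by simp
    also have "\<dots> \<le> nu (Suc k) (p (Suc k))"
      using adm step assms(3) unfolding AG2_admissible_run_def by simp
    also have "\<dots> \<le> nu (Suc k) (p l)" using step by simp
    finally show False by simp
  qed
qed simp

lemma nu_mono_step: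
  assumes "1 \<le> k" "k < card J" "j \<in> S (Suc k)"
  shows "nu k j \<le> nu (Suc k) j"
proof -
  obtain l where "Suc k \<le> l" "l \<le> card J" "j = p l"
    using S_eq_image_p[of "Suc k"] assms by auto
  then show ?thesis using nu_Suc_ge pivot_le_nu_p_later assms by simp
qed

end

theorem lemma4:
  fixes J :: "'a set" and F :: "'a set set" and w :: "'a set \<Rightarrow> 'a \<Rightarrow> real"
    and c :: "'a \<Rightarrow> real" and S :: "nat \<Rightarrow> 'a set" and nu :: "nat \<Rightarrow> 'a \<Rightarrow> real"
    and p :: "nat \<Rightarrow> 'a"
  assumes sys: "set_system J F"
    and wpos: "\<forall>T\<in>F. \<forall>j\<in>T. w T j > 0"
    and wmono: "\<forall>A\<in>F. \<forall>B\<in>F. \<forall>j. j \<in> A \<longrightarrow> A \<subset> B \<longrightarrow> w A j \<le> w B j"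
    and run: "AG2_run J F w c S nu p"
    and adm: "AG2_admissible_run (card J) nu p"
  shows "(\<forall>k. 1 \<le> k \<and> k \<le> card J - 1 \<longrightarrow> (\<forall>j\<in>S (k + 1). nu k j \<le> nu (k + 1) j))
       \<and> (\<forall>k l. 1 \<le> k \<and> k < l \<and> l \<le> card J \<longrightarrow>
            nu k (p k) \<le> nu k (p l) \<and>
            (\<forall>m. k \<le> m \<and> m < l \<longrightarrow> nu m (p l) \<le> nu (m + 1) (p l)))"
proof -
  interpret AG2_admissible J F w c S nu p
    using assms by unfold_locales
  show ?thesis
  proof (intro conjI allI impI ballI)
    fix k j assume k: "1 \<le> k \<and> k \<le> card J - 1" and "j \<in> S (k + 1)"
    moreover from k have "k < card J" by arith
    ultimately show "nu k j \<le> nu (k + 1) j" using nu_mono_step by simp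
  next
    fix k l assume "1 \<le> k \<and> k < l \<and> l \<le> card J"
    then show "nu k (p k) \<le> nu k (p l)" using pivot_le_nu_p_later by simp
    fix m assume "k \<le> m \<and> m < l"
    with \<open>1 \<le> k \<and> k < l \<and> l \<le> card J\<close> show "nu m (p l) \<le> nu (m + 1) (p l)"
      using nu_mono_step p_later_in_S by simp
  qed
qed

end
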